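(* For every nonempty finite poset $X$, \[ Z_{D(X)}(x)=\frac{x^3}{(1-x)^2}\,\frac{d}{dx}Z_X(x),\qquad Z^+_{D(X)}(x)=\frac{x}{(1-x)^2}\,\frac{d}{dx}Z^+_X(x). \] In particular, for $n\ge1$, $Z_{D(\langle n\rangle)}=n\,\zeta_{n+2}+(n+1)\,\zeta_{n+3}$, where $\zeta_j=\frac{x^j}{(1-x)^{j+1}}$.
   Context: For $n\ge1$, $\langle n\rangle$ is the chain $1<\dots<n$. For a finite poset $X$, $\Omega(X,n)$ (resp. $\Omega^+(X,n)$) is the number of maps $f:X\to\langle n\rangle$ with $u<v\Rightarrow f(u)<f(v)$ (resp. $u\le v\Rightarrow f(u)\le f(v)$); $Z_X(x)=\sum_{n\ge1}\Omega(X,n)x^n$ and $Z^+_X(x)=\sum_{n\ge1}\Omega^+(X,n)x^n$. The concatenation $\mu(Y,W)$ is the disjoint union of $Y$ and $W$ with their orders and every element of $Y$ below every element of $W$; $Y\sqcup W$ is the disjoint union with no relations between $Y$ and $W$. The handle operation is $D(X)=\mu\big(\langle1\rangle,\mu(\langle1\rangle\sqcup X,\langle1\rangle)\big)$, i.e. $X$ together with a new minimum $x_0$, a new maximum $x_1$, and a new element $y$ with $x_0<y<x_1$ incomparable to all elements of $X$. *)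

theory Defs
  imports "HOL-Library.FuncSet" "HOL-Computational_Algebra.Formal_Power_Series"
begin

definition poset_on :: "'a set \<Rightarrow> ('a \<Rightarrow> 'a \<Rightarrow> bool) \<Rightarrow> bool" where
  "poset_on A le \<longleftrightarrow>
     (\<forall>x\<in>A. le x x) \<and>
     (\<forall>x\<in>A. \<forall>y\<in>A. le x y \<and> le y x \<longrightarrow> x = y) \<and>
     (\<forall>x\<in>A. \<forall>y\<in>A. \<forall>z\<in>A. le x y \<and> le y z \<longrightarrow> le x z)"

definition Omega :: "'a set \<Rightarrow> ('a \<Rightarrow> 'a \<Rightarrow> bool) \<Rightarrow> nat \<Rightarrow> nat" where
  "Omega A le n = card {f \<in> A \<rightarrow>\<^sub>E {1..n}.
      \<forall>u\<in>A. \<forall>v\<in>A. (le u v \<and> u \<noteq> v) \<longrightarrow> f u < f v}"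

definition Omega_plus :: "'a set \<Rightarrow> ('a \<Rightarrow> 'a \<Rightarrow> bool) \<Rightarrow> nat \<Rightarrow> nat" where
  "Omega_plus A le n = card {f \<in> A \<rightarrow>\<^sub>E {1..n}.
      \<forall>u\<in>A. \<forall>v\<in>A. le u v \<longrightarrow> f u \<le> f v}"

definition Z :: "'a set \<Rightarrow> ('a \<Rightarrow> 'a \<Rightarrow> bool) \<Rightarrow> rat fps" where
  "Z A le = Abs_fps (\<lambda>n. if n \<ge> 1 then of_nat (Omega A le n) else 0)"

definition Z_plus :: "'a set \<Rightarrow> ('a \<Rightarrow> 'a \<Rightarrow> bool) \<Rightarrow> rat fps" where
  "Z_plus A le = Abs_fps (\<lambda>n. if n \<ge> 1 then of_nat (Omega_plus A le n) else 0)"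

text \<open>The handle operation D(X): X plus new minimum x0 = Inr 0, new element y = Inr 1,
  new maximum x1 = Inr 2, with x0 < y < x1 and y incomparable to X.\<close>
definition D_carrier :: "'a set \<Rightarrow> ('a + nat) set" where
  "D_carrier A = Inl ` A \<union> {Inr 0, Inr 1, Inr 2}"

definition D_le :: "('a \<Rightarrow> 'a \<Rightarrow> bool) \<Rightarrow> ('a + nat) \<Rightarrow> ('a + nat) \<Rightarrow> bool" where
  "D_le le u v \<longleftrightarrow> u = Inr 0 \<or> v = Inr 2 \<or> u = v \<or>
     (\<exists>a b. u = Inl a \<and> v = Inl b \<and> le a b)"

definition zeta :: "nat \<Rightarrow> rat fps" where
  "zeta j = fps_X ^ j / (1 - fps_X) ^ (j + 1)"

end

theory Submission
  imports Defs
begin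

(* A strictly (weakly) order-preserving map on D(X) is determined by the values a < b (a \<le> b) of
   the new minimum and maximum, a value of y strictly (weakly) between them, and a map of X into
   that same interval. With m the size of the interval there are m choices for y and Omega(X,m)
   (resp. Omega^+(X,m)) choices on X, and an interval of size m occurs n-1-m (resp. n+1-m) times
   in <n>. Summing, Omega(D(X),n) = sum_m (n-1-m) m Omega(X,m), which is the coefficient form of
   the first identity, since x d/dx Z_X(x) = sum_m m Omega(X,m) x^m and x/(1-x)^2 = sum_j j x^j;
   the weak case is the same with n+1-m. For the chain, strict maps <n> \<rightarrow> <m> correspond to n-subsets of <m>, so
   Z_<n> = zeta_n, and the last identity is a derivative computation. *)

definition order_maps ::
  "'a set \<Rightarrow> ('a \<Rightarrow> 'a \<Rightarrow> bool) \<Rightarrow> (nat \<Rightarrow> nat \<Rightarrow> bool) \<Rightarrow> nat set \<Rightarrow> ('a \<Rightarrow> nat) set" where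
  "order_maps A R P B = {f \<in> A \<rightarrow>\<^sub>E B. \<forall>u\<in>A. \<forall>v\<in>A. R u v \<longrightarrow> P (f u) (f v)}"

lemma Omega_eq_card_order_maps:
  "Omega A le n = card (order_maps A (\<lambda>u v. le u v \<and> u \<noteq> v) (<) {1..n})"
  by (simp add: Omega_def order_maps_def)

lemma Omega_plus_eq_card_order_maps:
  "Omega_plus A le n = card (order_maps A le (\<le>) {1..n})"
  by (simp add: Omega_plus_def order_maps_def)

lemma card_order_maps_shift:
  assumes "\<And>x y. P (d + x) (d + y) = P x y"
  shows "card (order_maps A R P ((+) d ` B)) = card (order_maps A R P B)"
proof -
  have unshift: "g x - d \<in> B" "d + (g x - d) = g x"
    if "g \<in> order_maps A R P ((+) d ` B)" "x \<in> A" for g x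
    using that by (force simp: order_maps_def)+
  have "bij_betw (\<lambda>g. restrict (\<lambda>x. d + g x) A) (order_maps A R P B) (order_maps A R P ((+) d ` B))"
  proof (rule bij_betw_byWitness[where f' = "\<lambda>g. restrict (\<lambda>x. g x - d) A"])
    show "(\<lambda>g. restrict (\<lambda>x. g x - d) A) ` order_maps A R P ((+) d ` B) \<subseteq> order_maps A R P B"
    proof clarify
      fix g assume g: "g \<in> order_maps A R P ((+) d ` B)"
      have "P (g x - d) (g y - d)" if "x \<in> A" "y \<in> A" "R x y" for x y
        using g that assms[of "g x - d" "g y - d"] by (simp add: unshift order_maps_def)
      with g show "restrict (\<lambda>x. g x - d) A \<in> order_maps A R P B"
        by (auto simp: order_maps_def unshift)
    qed
  qed (use unshift in \<open>auto simp: order_maps_def assms fun_eq_iff PiE_def extensional_def\<close>)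
  then show ?thesis by (simp add: bij_betw_same_card)
qed

definition handle_maps ::
  "'a set \<Rightarrow> ('a \<Rightarrow> 'a \<Rightarrow> bool) \<Rightarrow> (nat \<Rightarrow> nat \<Rightarrow> bool) \<Rightarrow> nat set \<Rightarrow> ('a + nat \<Rightarrow> nat) set" where
  "handle_maps A R P B = {f \<in> D_carrier A \<rightarrow>\<^sub>E B.
     P (f (Inr 0)) (f (Inr 1)) \<and> P (f (Inr 1)) (f (Inr 2)) \<and>
     (\<forall>x\<in>A. P (f (Inr 0)) (f (Inl x)) \<and> P (f (Inl x)) (f (Inr 2))) \<and>
     (\<forall>x\<in>A. \<forall>y\<in>A. R x y \<longrightarrow> P (f (Inl x)) (f (Inl y)))}"

lemma Omega_D_eq_card_handle_maps:
  "Omega (D_carrier A) (D_le le) n = card (handle_maps A (\<lambda>u v. le u v \<and> u \<noteq> v) (<) {1..n})"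
proof -
  have "order_maps (D_carrier A) (\<lambda>u v. D_le le u v \<and> u \<noteq> v) (<) {1..n}
      = handle_maps A (\<lambda>u v. le u v \<and> u \<noteq> v) (<) {1..n}"
    unfolding order_maps_def handle_maps_def D_carrier_def D_le_def
    by (auto intro: less_trans)
  then show ?thesis by (simp add: Omega_eq_card_order_maps)
qed

lemma Omega_plus_D_eq_card_handle_maps:
  "Omega_plus (D_carrier A) (D_le le) n = card (handle_maps A le (\<le>) {1..n})"
proof -
  have "order_maps (D_carrier A) (D_le le) (\<le>) {1..n} = handle_maps A le (\<le>) {1..n}"
    unfolding order_maps_def handle_maps_def D_carrier_def D_le_def
    by (auto intro: order_trans)
  then show ?thesis by (simp add: Omega_plus_eq_card_order_maps)
qed

lemma mem_D_carrier [simp]: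
  "Inl x \<in> D_carrier A \<longleftrightarrow> x \<in> A" "Inr k \<in> D_carrier A \<longleftrightarrow> k \<le> 2"
  by (auto simp: D_carrier_def)

definition between :: "(nat \<Rightarrow> nat \<Rightarrow> bool) \<Rightarrow> nat set \<Rightarrow> nat \<Rightarrow> nat \<Rightarrow> nat set" where
  "between P B a b = {c \<in> B. P a c \<and> P c b}"

lemma card_handle_maps_fiber:
  assumes "a \<in> B" "b \<in> B"
  shows "card {f \<in> handle_maps A R P B. f (Inr 0) = a \<and> f (Inr 2) = b}
       = card (between P B a b) * card (order_maps A R P (between P B a b))"
proof -
  define extend :: "nat \<times> ('a \<Rightarrow> nat) \<Rightarrow> 'a + nat \<Rightarrow> nat" where
    "extend = (\<lambda>(c, g) u. case u of Inl x \<Rightarrow> g x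
       | Inr k \<Rightarrow> if k = 0 then a else if k = 1 then c else if k = 2 then b else undefined)"
  have "bij_betw (\<lambda>f. (f (Inr 1), restrict (f \<circ> Inl) A))
      {f \<in> handle_maps A R P B. f (Inr 0) = a \<and> f (Inr 2) = b}
      (between P B a b \<times> order_maps A R P (between P B a b))"
  proof (rule bij_betw_byWitness[where f' = extend])
    show "\<forall>f\<in>{f \<in> handle_maps A R P B. f (Inr 0) = a \<and> f (Inr 2) = b}.
        extend (f (Inr 1), restrict (f \<circ> Inl) A) = f"
    proof (intro ballI ext)
      fix f u assume f: "f \<in> {f \<in> handle_maps A R P B. f (Inr 0) = a \<and> f (Inr 2) = b}"
      then have "f u = undefined" if "u \<notin> D_carrier A"
        using that by (auto simp: handle_maps_def PiE_def extensional_def)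
      with f show "extend (f (Inr 1), restrict (f \<circ> Inl) A) u = f u"
        by (cases u) (auto simp: extend_def)
    qed
    show "\<forall>p\<in>between P B a b \<times> order_maps A R P (between P B a b).
        (\<lambda>f. (f (Inr 1), restrict (f \<circ> Inl) A)) (extend p) = p"
      by (auto simp: extend_def order_maps_def fun_eq_iff)
    show "(\<lambda>f. (f (Inr 1), restrict (f \<circ> Inl) A)) `
        {f \<in> handle_maps A R P B. f (Inr 0) = a \<and> f (Inr 2) = b}
        \<subseteq> between P B a b \<times> order_maps A R P (between P B a b)"
      by (auto simp: handle_maps_def order_maps_def between_def D_carrier_def)
    show "extend ` (between P B a b \<times> order_maps A R P (between P B a b))
        \<subseteq> {f \<in> handle_maps A R P B. f (Inr 0) = a \<and> f (Inr 2) = b}"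
      using assms
      by (auto simp: extend_def handle_maps_def order_maps_def between_def
          PiE_def Pi_def extensional_def split: sum.split)
  qed
  then show ?thesis by (simp add: bij_betw_same_card card_cartesian_product)
qed

lemma card_handle_maps:
  assumes "finite A" "finite B"
  shows "card (handle_maps A R P B)
       = (\<Sum>a\<in>B. \<Sum>b\<in>B. card (between P B a b) * card (order_maps A R P (between P B a b)))"
proof -
  let ?ends = "\<lambda>f. (f (Inr 0), f (Inr 2))"
  have "finite (handle_maps A R P B)"
    by (rule finite_subset[of _ "D_carrier A \<rightarrow>\<^sub>E B"])
       (auto simp: handle_maps_def D_carrier_def assms intro!: finite_PiE)
  moreover have "?ends ` handle_maps A R P B \<subseteq> B \<times> B"
    by (auto simp: handle_maps_def PiE_iff)
  ultimately have "card (handle_maps A R P B)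
      = (\<Sum>p\<in>B \<times> B. card {f \<in> handle_maps A R P B. ?ends f = p})"
    using sum.group[of "handle_maps A R P B" "B \<times> B" ?ends "\<lambda>_. 1::nat"] assms by simp
  also have "\<dots> = (\<Sum>a\<in>B. \<Sum>b\<in>B. card {f \<in> handle_maps A R P B. f (Inr 0) = a \<and> f (Inr 2) = b})"
    by (simp add: sum.cartesian_product split_def prod_eq_iff)
  also have "\<dots> = (\<Sum>a\<in>B. \<Sum>b\<in>B. card (between P B a b) * card (order_maps A R P (between P B a b)))"
    by (intro sum.cong refl card_handle_maps_fiber)
  finally show ?thesis .
qed

lemma sum_pairs_by_difference:
  fixes h :: "nat \<Rightarrow> nat"
  shows "(\<Sum>a=1..n. \<Sum>b=1..n. if a \<le> b then h (b - a) else 0) = (\<Sum>k<n. (n - k) * h k)"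
proof (induction n)
  case (Suc n)
  have "(\<Sum>a=1..Suc n. \<Sum>b=1..Suc n. if a \<le> b then h (b - a) else 0)
      = (\<Sum>a=1..n. \<Sum>b=1..n. if a \<le> b then h (b - a) else 0) + (\<Sum>a=1..Suc n. h (Suc n - a))"
    by (simp add: sum.distrib)
  also have "(\<Sum>a=1..Suc n. h (Suc n - a)) = (\<Sum>k<Suc n. h k)"
    by (rule sum.reindex_bij_witness[of _ "\<lambda>k. Suc n - k" "\<lambda>a. Suc n - a"]) auto
  finally show ?case
    using Suc.IH by (simp add: Suc_diff_le sum.distrib)
qed simp

lemma Omega_D_eq_sum:
  assumes "finite A"
  shows "Omega (D_carrier A) (D_le le) n = (\<Sum>k<n. (n - k) * ((k - 1) * Omega A le (k - 1)))"
proof -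
  let ?R = "\<lambda>u v. le u v \<and> u \<noteq> v"
  have fiber: "card (between (<) {1..n} a b) * card (order_maps A ?R (<) (between (<) {1..n} a b))
      = (if a \<le> b then (b - a - 1) * Omega A le (b - a - 1) else 0)"
    if "a \<in> {1..n}" "b \<in> {1..n}" for a b
  proof -
    have "between (<) {1..n} a b = {a + 1..b - 1}"
      using that by (auto simp: between_def)
    also have "\<dots> = (+) a ` {1..b - a - 1}"
      by (subst image_add_atLeastAtMost) (cases "a < b"; simp)
    finally have interval: "between (<) {1..n} a b = (+) a ` {1..b - a - 1}" .
    have "card (order_maps A ?R (<) (between (<) {1..n} a b)) = Omega A le (b - a - 1)"
      unfolding interval Omega_eq_card_order_maps by (rule card_order_maps_shift) simp
    moreover have "card (between (<) {1..n} a b) = b - a - 1"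
      unfolding interval by (simp add: card_image)
    ultimately show ?thesis by (simp add: Suc_diff_le)
  qed
  have "Omega (D_carrier A) (D_le le) n
      = (\<Sum>a=1..n. \<Sum>b=1..n.
           card (between (<) {1..n} a b) * card (order_maps A ?R (<) (between (<) {1..n} a b)))"
    by (simp add: Omega_D_eq_card_handle_maps card_handle_maps assms)
  also have "\<dots> = (\<Sum>a=1..n. \<Sum>b=1..n. if a \<le> b then (b - a - 1) * Omega A le (b - a - 1) else 0)"
    by (intro sum.cong refl fiber)
  also have "\<dots> = (\<Sum>k<n. (n - k) * ((k - 1) * Omega A le (k - 1)))"
    by (rule sum_pairs_by_difference)
  finally show ?thesis .
qed

lemma Omega_plus_D_eq_sum:
  assumes "finite A"
  shows "Omega_plus (D_carrier A) (D_le le) n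
       = (\<Sum>k<n. (n - k) * ((k + 1) * Omega_plus A le (k + 1)))"
proof -
  have fiber: "card (between (\<le>) {1..n} a b) * card (order_maps A le (\<le>) (between (\<le>) {1..n} a b))
      = (if a \<le> b then (b - a + 1) * Omega_plus A le (b - a + 1) else 0)"
    if "a \<in> {1..n}" "b \<in> {1..n}" for a b
  proof -
    have "between (\<le>) {1..n} a b = {a..b}"
      using that by (auto simp: between_def)
    also have "\<dots> = (+) (a - 1) ` {1..b + 1 - a}"
      using that by (subst image_add_atLeastAtMost) (cases "a \<le> b"; simp)
    finally have interval: "between (\<le>) {1..n} a b = (+) (a - 1) ` {1..b + 1 - a}" .
    have "card (order_maps A le (\<le>) (between (\<le>) {1..n} a b)) = Omega_plus A le (b + 1 - a)"
      unfolding interval Omega_plus_eq_card_order_maps by (rule card_order_maps_shift) simp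
    moreover have "card (between (\<le>) {1..n} a b) = b + 1 - a"
      unfolding interval by (simp add: card_image)
    ultimately show ?thesis by (simp add: Suc_diff_le)
  qed
  have "Omega_plus (D_carrier A) (D_le le) n
      = (\<Sum>a=1..n. \<Sum>b=1..n.
           card (between (\<le>) {1..n} a b) * card (order_maps A le (\<le>) (between (\<le>) {1..n} a b)))"
    by (simp add: Omega_plus_D_eq_card_handle_maps card_handle_maps assms)
  also have "\<dots> = (\<Sum>a=1..n. \<Sum>b=1..n. if a \<le> b then (b - a + 1) * Omega_plus A le (b - a + 1) else 0)"
    by (intro sum.cong refl fiber)
  also have "\<dots> = (\<Sum>k<n. (n - k) * ((k + 1) * Omega_plus A le (k + 1)))"
    by (rule sum_pairs_by_difference)
  finally show ?thesis .
qed

lemma fps_X_over_one_minus_X_squared: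
  "fps_X / (1 - fps_X) ^ 2 = (Abs_fps of_nat :: 'a::field_char_0 fps)"
proof (rule fps_ext)
  fix j
  have "inverse ((1 - fps_X) ^ 2 :: 'a fps) = Abs_fps (\<lambda>i. of_nat (i + 1))"
    using one_minus_const_fps_X_neg_power'[of 2 "1::'a"] by simp
  then show "fps_nth (fps_X / (1 - fps_X) ^ 2 :: 'a fps) j = fps_nth (Abs_fps of_nat :: 'a fps) j"
    by (simp add: fps_divide_unit)
qed

lemma Abs_fps_eq_X_div_one_minus_X_squared_mult:
  assumes "\<And>n. c n = (\<Sum>k<n. (n - k) * h k)"
  shows "Abs_fps (\<lambda>n. of_nat (c n))
       = fps_X / (1 - fps_X) ^ 2 * Abs_fps (\<lambda>k. of_nat (h k) :: 'a::field_char_0)"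
proof (rule fps_ext)
  fix n
  have "fps_nth (Abs_fps (\<lambda>k. of_nat (h k)) * Abs_fps of_nat) n
      = (\<Sum>k\<le>n. of_nat (h k) * (of_nat (n - k) :: 'a))"
    by (simp add: fps_mult_nth atLeast0AtMost)
  also have "\<dots> = of_nat (c n)"
    by (simp add: assms lessThan_Suc_atMost[symmetric] mult.commute)
  finally show "fps_nth (Abs_fps (\<lambda>n. of_nat (c n))) n
      = fps_nth (fps_X / (1 - fps_X) ^ 2 * Abs_fps (\<lambda>k. of_nat (h k)) :: 'a fps) n"
    unfolding fps_X_over_one_minus_X_squared by (simp add: mult.commute)
qed

lemma Z_D_eq:
  assumes "finite A"
  shows "Z (D_carrier A) (D_le le) = fps_X ^ 3 / (1 - fps_X) ^ 2 * fps_deriv (Z A le)"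
proof -
  have "Z (D_carrier A) (D_le le) = Abs_fps (\<lambda>n. of_nat (Omega (D_carrier A) (D_le le) n))"
  proof -
    have "Omega (D_carrier A) (D_le le) 0 = 0"
      by (simp add: Omega_D_eq_sum assms)
    then show ?thesis
      by (intro fps_ext) (auto simp: Z_def not_less_eq_eq)
  qed
  also have "\<dots> = fps_X / (1 - fps_X) ^ 2 * Abs_fps (\<lambda>k. of_nat ((k - 1) * Omega A le (k - 1)))"
    by (rule Abs_fps_eq_X_div_one_minus_X_squared_mult) (rule Omega_D_eq_sum[OF assms])
  also have "Abs_fps (\<lambda>k. of_nat ((k - 1) * Omega A le (k - 1))) = fps_X ^ 2 * fps_deriv (Z A le)"
    by (rule fps_ext) (auto simp: fps_X_power_mult_nth Z_def intro!: arg_cong[where f = "Omega A le"])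
  also have "fps_X / (1 - fps_X) ^ 2 * (fps_X ^ 2 * fps_deriv (Z A le))
      = fps_X ^ 3 / (1 - fps_X) ^ 2 * fps_deriv (Z A le)"
    by (simp add: fps_divide_unit power_numeral_reduce algebra_simps)
  finally show ?thesis .
qed

lemma Z_plus_D_eq:
  assumes "finite A"
  shows "Z_plus (D_carrier A) (D_le le) = fps_X / (1 - fps_X) ^ 2 * fps_deriv (Z_plus A le)"
proof -
  have "Z_plus (D_carrier A) (D_le le) = Abs_fps (\<lambda>n. of_nat (Omega_plus (D_carrier A) (D_le le) n))"
  proof -
    have "Omega_plus (D_carrier A) (D_le le) 0 = 0"
      by (simp add: Omega_plus_D_eq_sum assms)
    then show ?thesis
      by (intro fps_ext) (auto simp: Z_plus_def not_less_eq_eq)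
  qed
  also have "\<dots> = fps_X / (1 - fps_X) ^ 2 * Abs_fps (\<lambda>k. of_nat ((k + 1) * Omega_plus A le (k + 1)))"
    by (rule Abs_fps_eq_X_div_one_minus_X_squared_mult) (rule Omega_plus_D_eq_sum[OF assms])
  also have "Abs_fps (\<lambda>k. of_nat ((k + 1) * Omega_plus A le (k + 1))) = fps_deriv (Z_plus A le)"
    by (rule fps_ext) (simp add: Z_plus_def algebra_simps)
  finally show ?thesis .
qed

lemma sorted_list_of_set_set_strict:
  "sorted_wrt (<) xs \<Longrightarrow> sorted_list_of_set (set xs) = xs"
  by (simp add: sorted_list_of_set_sort_remdups strict_sorted_iff distinct_remdups_id sorted_sort_id)

lemma Omega_chain: "Omega {1..n} (\<le>) m = m choose n"
proof -
  let ?C = "{f \<in> {1..n} \<rightarrow>\<^sub>E {1..m}. \<forall>u\<in>{1..n}. \<forall>v\<in>{1..n}. u \<le> v \<and> u \<noteq> v \<longrightarrow> f u < f v}"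
  have sorted_image: "sorted_list_of_set (f ` {1..n}) = map f [1..<n+1]" if "f \<in> ?C" for f
  proof -
    have "sorted_wrt (<) (map f [1..<n+1])"
      using that by (auto simp: sorted_wrt_iff_nth_less nth_upt simp del: upt_Suc)
    then have "sorted_list_of_set (set (map f [1..<n+1])) = map f [1..<n+1]"
      by (rule sorted_list_of_set_set_strict)
    moreover have "set (map f [1..<n+1]) = f ` {1..n}"
      by (simp add: atLeastLessThanSuc_atLeastAtMost del: upt_Suc)
    ultimately show ?thesis by simp
  qed
  have inj: "inj_on (\<lambda>f. f ` {1..n}) ?C"
  proof (rule inj_onI)
    fix f g assume f: "f \<in> ?C" and g: "g \<in> ?C" and "f ` {1..n} = g ` {1..n}"
    then have "map f [1..<n+1] = map g [1..<n+1]"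
      using sorted_image[OF f] sorted_image[OF g] by simp
    then have "\<forall>i\<in>{1..n}. f i = g i"
      by (simp add: map_eq_conv atLeastLessThanSuc_atLeastAtMost del: upt_Suc)
    with f g show "f = g"
      by (auto intro: PiE_ext)
  qed
  have image: "(\<lambda>f. f ` {1..n}) ` ?C = {S. S \<subseteq> {1..m} \<and> card S = n}"
  proof
    show "(\<lambda>f. f ` {1..n}) ` ?C \<subseteq> {S. S \<subseteq> {1..m} \<and> card S = n}"
    proof
      fix S assume "S \<in> (\<lambda>f. f ` {1..n}) ` ?C"
      then obtain f where f: "f \<in> ?C" and S: "S = f ` {1..n}" by (rule imageE)
      have "card S = n"
        using arg_cong[OF sorted_image[OF f], of length] S by simp
      moreover have "S \<subseteq> {1..m}"
        using f S by (auto simp: PiE_iff)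
      ultimately show "S \<in> {S. S \<subseteq> {1..m} \<and> card S = n}"
        by simp
    qed
  next
    show "{S. S \<subseteq> {1..m} \<and> card S = n} \<subseteq> (\<lambda>f. f ` {1..n}) ` ?C"
    proof
      fix S assume "S \<in> {S. S \<subseteq> {1..m} \<and> card S = n}"
      then have S: "S \<subseteq> {1..m}" "card S = n" by simp_all
      then have fin: "finite S" using finite_subset by blast
      define L where "L = sorted_list_of_set S"
      define g where "g = restrict (\<lambda>i. L ! (i - 1)) {1..n}"
      have len: "length L = n" using S fin by (simp add: L_def)
      have "map g [1..<n+1] = L"
        by (rule nth_equalityI) (simp_all add: g_def len nth_upt del: upt_Suc)
      then have gS: "g ` {1..n} = S"
        using fin set_map[of g "[1..<n+1]"]
        by (simp add: L_def atLeastLessThanSuc_atLeastAtMost del: upt_Suc)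
      have gC: "g \<in> ?C"
      proof -
        have "L ! (i - 1) \<in> S" if "i \<in> {1..n}" for i
          using that fin len nth_mem[of "i - 1" L] by (auto simp: L_def)
        moreover have "L ! (u - 1) < L ! (v - 1)" if "u \<in> {1..n}" "v \<in> {1..n}" "u < v" for u v
          using that len sorted_wrt_nth_less[OF strict_sorted_list_of_set, of "u - 1" "v - 1" S]
          by (simp add: L_def)
        ultimately show ?thesis
          using S(1) by (auto simp: g_def)
      qed
      show "S \<in> (\<lambda>f. f ` {1..n}) ` ?C"
        using gS gC by (auto simp del: PiE_iff)
    qed
  qed
  have "Omega {1..n} (\<le>) m = card ((\<lambda>f. f ` {1..n}) ` ?C)"
    unfolding Omega_def card_image[OF inj] ..
  also have "\<dots> = m choose n"
    unfolding image using n_subsets[of "{1..m}" n] by simp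
  finally show ?thesis .
qed

lemma fps_nth_zeta: "fps_nth (zeta j) k = of_nat (k choose j)"
proof -
  have "fps_nth (zeta j) k = fps_nth (fps_X ^ j * inverse ((1 - fps_X :: rat fps) ^ (j + 1))) k"
    by (simp add: zeta_def fps_divide_unit)
  also have "\<dots> = (if k < j then 0 else of_nat ((j + (k - j)) choose (k - j)))"
    using one_minus_const_fps_X_neg_power'[of "j + 1" "1::rat"] by (simp add: fps_X_power_mult_nth)
  also have "\<dots> = of_nat (k choose j)"
    by (simp add: binomial_symmetric[symmetric])
  finally show ?thesis .
qed

lemma Z_chain: "1 \<le> n \<Longrightarrow> Z {1..n} (\<le>) = zeta n"
  unfolding Z_def Omega_chain by (rule fps_ext) (simp add: fps_nth_zeta)

lemma fps_X_power_div_one_minus_X_power: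
  "fps_X ^ j / (1 - fps_X) ^ i = fps_X ^ j * inverse (1 - fps_X :: 'a::field fps) ^ i"
  by (simp add: fps_divide_unit fps_inverse_power)

lemma X_cube_over_square_mult_deriv_zeta:
  assumes "1 \<le> n"
  shows "fps_X ^ 3 / (1 - fps_X) ^ 2 * fps_deriv (zeta n)
       = of_nat n * zeta (n + 2) + of_nat (n + 1) * zeta (n + 3)"
proof -
  obtain k where n: "n = Suc k" using assms by (cases n) auto
  define U :: "rat fps" where "U = inverse (1 - fps_X)"
  have deriv_power: "fps_deriv (F ^ Suc i) = of_nat (Suc i) * fps_deriv F * F ^ i"
    for F :: "rat fps" and i
    using fps_deriv_power'[of F "Suc i"] by simp
  have dU: "fps_deriv U = U ^ 2"
    by (simp add: U_def fps_inverse_deriv)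
  have "fps_deriv (zeta n) = of_nat (Suc k) * fps_X ^ k * U ^ Suc (Suc k)
      + fps_X ^ Suc k * (of_nat (Suc (Suc k)) * U ^ 2 * U ^ Suc k)"
    unfolding n zeta_def fps_X_power_div_one_minus_X_power U_def[symmetric] Suc_eq_plus1[symmetric]
    by (simp only: fps_deriv_mult deriv_power dU fps_deriv_fps_X mult_1_right)
       (simp add: algebra_simps)
  then show ?thesis
    unfolding n zeta_def fps_X_power_div_one_minus_X_power U_def[symmetric]
    by (simp add: power_add eval_nat_numeral algebra_simps)
qed

theorem mainTheorem6:
  fixes A :: "'a set" and le :: "'a \<Rightarrow> 'a \<Rightarrow> bool"
  assumes "finite A" and "A \<noteq> {}" and "poset_on A le"
  shows "Z (D_carrier A) (D_le le)
           = fps_X ^ 3 / (1 - fps_X) ^ 2 * fps_deriv (Z A le)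
       \<and> Z_plus (D_carrier A) (D_le le)
           = fps_X / (1 - fps_X) ^ 2 * fps_deriv (Z_plus A le)
       \<and> (\<forall>n::nat \<ge> 1. Z (D_carrier {1..n}) (D_le (\<le>))
           = of_nat n * zeta (n + 2) + of_nat (n + 1) * zeta (n + 3))"
proof -
  have "Z (D_carrier {1..n}) (D_le (\<le>)) = of_nat n * zeta (n + 2) + of_nat (n + 1) * zeta (n + 3)"
    if "1 \<le> n" for n :: nat
    using Z_D_eq[of "{1..n}" "(\<le>)"] Z_chain[OF that] X_cube_over_square_mult_deriv_zeta[OF that]
    by simp
  with assms(1) show ?thesis
    by (simp add: Z_D_eq Z_plus_D_eq)
qed

end
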